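(* Let $f\in\mathbb C[x_1,\dots,x_n]$ be a nonzero homogeneous polynomial and $d\in\mathbb N$. Then $b_{\mathrm{Ann}(1/f),\mathbf e}(s)=s+d$ if and only if $f$ has degree $d$, where $\mathbf e=(1,\dots,1)$.
   Context: $D_n$ is the $n$-th Weyl algebra ($\partial_ix_j=x_j\partial_i+\delta_{ij}$); ideals are left ideals. For $\omega\in\mathbb R^n$, the $(-\omega,\omega)$-weight of $x^\alpha\partial^\beta$ is $-\langle\omega,\alpha\rangle+\langle\omega,\beta\rangle$; $\mathrm{in}_{(-\omega,\omega)}(I)$ is the left ideal generated by the maximal-weight parts of the elements of $I$. For a holonomic ideal $I$ and $\omega\neq0$, with $s=\sum_i\omega_ix_i\partial_i$, the b-function $b_{I,\omega}(s)$ is the monic generator of $\mathrm{in}_{(-\omega,\omega)}(I)\cap\mathbb C[s]$. $\mathrm{Ann}(1/f)=\{P\in D_n:P\bullet f^{-1}=0\}$ with $x_i\bullet g=x_ig$, $\partial_i\bullet g=\partial g/\partial x_i$. $\mathbb N=\{0,1,2,\dots\}$. *)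

theory Defs
  imports "HOL-Analysis.Analysis" "HOL-Computational_Algebra.Polynomial"
begin

(* Variables are indexed by 0..n-1. Exponent vectors are functions nat => nat
   (required to vanish at indices >= n). *)

type_synonym expo = "nat \<Rightarrow> nat"

type_synonym cpoly = "expo \<Rightarrow> complex"

definition mpolys :: "nat \<Rightarrow> cpoly set" where
  "mpolys n = {f. finite {a. f a \<noteq> 0} \<and> (\<forall>a. f a \<noteq> 0 \<longrightarrow> (\<forall>i\<ge>n. a i = 0))}"

definition expo_deg :: "nat \<Rightarrow> expo \<Rightarrow> nat" where
  "expo_deg n a = (\<Sum>i<n. a i)"

definition mpoly_eval :: "nat \<Rightarrow> cpoly \<Rightarrow> (nat \<Rightarrow> complex) \<Rightarrow> complex" where
  "mpoly_eval n f z = (\<Sum>a\<in>{a. f a \<noteq> 0}. f a * (\<Prod>i<n. z i ^ a i))"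

definition homogeneous :: "nat \<Rightarrow> cpoly \<Rightarrow> bool" where
  "homogeneous n f \<longleftrightarrow> (\<forall>a b. f a \<noteq> 0 \<longrightarrow> f b \<noteq> 0 \<longrightarrow> expo_deg n a = expo_deg n b)"

definition total_degree :: "nat \<Rightarrow> cpoly \<Rightarrow> nat" where
  "total_degree n f = Max (expo_deg n ` {a. f a \<noteq> 0})"

(* ---------- The Weyl algebra D_n, elements in normal-ordered form ----------
   P = sum_{(a,b)} P(a,b) x^a \<partial>^b *)

type_synonym weyl = "expo \<times> expo \<Rightarrow> complex"

definition weyl_elems :: "nat \<Rightarrow> weyl set" where
  "weyl_elems n = {P. finite {m. P m \<noteq> 0} \<and>
      (\<forall>a b. P (a, b) \<noteq> 0 \<longrightarrow> (\<forall>i\<ge>n. a i = 0 \<and> b i = 0))}"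

definition weyl_one :: weyl where
  "weyl_one = (\<lambda>(a, b). if a = (\<lambda>_. 0) \<and> b = (\<lambda>_. 0) then 1 else 0)"

definition lmul_x :: "nat \<Rightarrow> weyl \<Rightarrow> weyl" where
  "lmul_x i P = (\<lambda>(a, b). if 0 < a i then P (a(i := a i - 1), b) else 0)"

(* left multiplication by \<partial>_i :  \<partial>_i x^a \<partial>^b = x^a \<partial>^(b+e_i) + a_i x^(a-e_i) \<partial>^b *)
definition lmul_d :: "nat \<Rightarrow> weyl \<Rightarrow> weyl" where
  "lmul_d i P = (\<lambda>(a, b). (if 0 < b i then P (a, b(i := b i - 1)) else 0)
                          + of_nat (a i + 1) * P (a(i := a i + 1), b))"

inductive_set lideal :: "nat \<Rightarrow> weyl set \<Rightarrow> weyl set" for n S where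
  gen: "P \<in> S \<Longrightarrow> P \<in> lideal n S"
| zero: "(\<lambda>_. 0) \<in> lideal n S"
| add: "P \<in> lideal n S \<Longrightarrow> Q \<in> lideal n S \<Longrightarrow> (\<lambda>m. P m + Q m) \<in> lideal n S"
| smult: "P \<in> lideal n S \<Longrightarrow> (\<lambda>m. c * P m) \<in> lideal n S"
| lx: "P \<in> lideal n S \<Longrightarrow> i < n \<Longrightarrow> lmul_x i P \<in> lideal n S"
| ld: "P \<in> lideal n S \<Longrightarrow> i < n \<Longrightarrow> lmul_d i P \<in> lideal n S"

definition partial :: "nat \<Rightarrow> ((nat \<Rightarrow> complex) \<Rightarrow> complex) \<Rightarrow> (nat \<Rightarrow> complex) \<Rightarrow> complex" where
  "partial i h = (\<lambda>z. deriv (\<lambda>t. h (z(i := t))) (z i))"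

definition dpow :: "nat \<Rightarrow> expo \<Rightarrow> ((nat \<Rightarrow> complex) \<Rightarrow> complex) \<Rightarrow> (nat \<Rightarrow> complex) \<Rightarrow> complex" where
  "dpow n b g = foldr (\<lambda>i h. (partial i ^^ b i) h) [0..<n] g"

definition weyl_act :: "nat \<Rightarrow> weyl \<Rightarrow> ((nat \<Rightarrow> complex) \<Rightarrow> complex) \<Rightarrow> (nat \<Rightarrow> complex) \<Rightarrow> complex" where
  "weyl_act n P g = (\<lambda>z. \<Sum>m\<in>{m. P m \<noteq> 0}. P m * (\<Prod>i<n. z i ^ fst m i) * dpow n (snd m) g z)"

definition Ann_inv :: "nat \<Rightarrow> cpoly \<Rightarrow> weyl set" where
  "Ann_inv n f = {P \<in> weyl_elems n. \<forall>z. mpoly_eval n f z \<noteq> 0 \<longrightarrow>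
       weyl_act n P (\<lambda>w. 1 / mpoly_eval n f w) z = 0}"

definition weight :: "nat \<Rightarrow> (nat \<Rightarrow> real) \<Rightarrow> expo \<times> expo \<Rightarrow> real" where
  "weight n \<omega> m = - (\<Sum>i<n. \<omega> i * real (fst m i)) + (\<Sum>i<n. \<omega> i * real (snd m i))"

definition init_form :: "nat \<Rightarrow> (nat \<Rightarrow> real) \<Rightarrow> weyl \<Rightarrow> weyl" where
  "init_form n \<omega> P = (let M = Max (weight n \<omega> ` {m. P m \<noteq> 0}) in
      (\<lambda>m. if weight n \<omega> m = M then P m else 0))"

definition init_ideal :: "nat \<Rightarrow> (nat \<Rightarrow> real) \<Rightarrow> weyl set \<Rightarrow> weyl set" where
  "init_ideal n \<omega> I = lideal n {init_form n \<omega> P | P. P \<in> I \<and> P \<noteq> (\<lambda>_. 0)}"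

definition lmul_s :: "nat \<Rightarrow> (nat \<Rightarrow> real) \<Rightarrow> weyl \<Rightarrow> weyl" where
  "lmul_s n \<omega> Q = (\<lambda>m. \<Sum>i<n. complex_of_real (\<omega> i) * lmul_x i (lmul_d i Q) m)"

definition eval_s :: "nat \<Rightarrow> (nat \<Rightarrow> real) \<Rightarrow> complex poly \<Rightarrow> weyl" where
  "eval_s n \<omega> p = (\<lambda>m. \<Sum>k\<le>degree p. coeff p k * ((lmul_s n \<omega> ^^ k) weyl_one) m)"

(* b-function: the monic generator of in_(-\<omega>,\<omega>)(I) \<inter> C[s]
   (0 if this intersection is zero) *)
definition bfunction :: "nat \<Rightarrow> (nat \<Rightarrow> real) \<Rightarrow> weyl set \<Rightarrow> complex poly" where
  "bfunction n \<omega> I = (THE b. (b = 0 \<or> lead_coeff b = 1) \<and>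
      {p. eval_s n \<omega> p \<in> init_ideal n \<omega> I} = {q * b | q. True})"

end

theory Submission
  imports Defs "HOL-Computational_Algebra.Field_as_Ring"
begin

(* For the weight (1, ..., 1) the term x^a \<partial>^b has weight |b| - |a|, and it maps 1/f, which is
   homogeneous of degree -d, to a function homogeneous of degree |a| - |b| - d.  Hence, for an
   operator P, the value of P(1/f) at t z is a Laurent polynomial in t whose coefficients are the
   values at z of the weight components of P applied to 1/f.  If P annihilates 1/f, so does every
   weight component, in particular the initial form of P; thus in(Ann(1/f)) is contained in
   Ann(1/f), which does not contain 1.  Euler's identity  \<Sum> x_i \<partial>_i f = d f  says that
   s + d = \<Sum> x_i \<partial>_i + d annihilates 1/f, and s + d has weight 0, so it lies in the initial
   ideal.  An ideal of C[s] containing the monic linear s + d but no nonzero constant is generated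
   by it, so the b-function is s + d. *)

section \<open>Partial derivatives of polynomial functions\<close>

inductive_set poly_fun :: "((nat \<Rightarrow> complex) \<Rightarrow> complex) set" where
  const: "(\<lambda>_. c) \<in> poly_fun"
| coord: "(\<lambda>z. z i) \<in> poly_fun"
| add: "p \<in> poly_fun \<Longrightarrow> q \<in> poly_fun \<Longrightarrow> (\<lambda>z. p z + q z) \<in> poly_fun"
| mult: "p \<in> poly_fun \<Longrightarrow> q \<in> poly_fun \<Longrightarrow> (\<lambda>z. p z * q z) \<in> poly_fun"

lemma poly_fun_cmult: "p \<in> poly_fun \<Longrightarrow> (\<lambda>z. c * p z) \<in> poly_fun"
  by (rule poly_fun.mult[OF poly_fun.const])

lemma poly_fun_diff: "p \<in> poly_fun \<Longrightarrow> q \<in> poly_fun \<Longrightarrow> (\<lambda>z. p z - q z) \<in> poly_fun"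
  using poly_fun.add[OF _ poly_fun_cmult[of q "-1"], of p] by simp

lemma poly_fun_sum:
  "finite A \<Longrightarrow> (\<And>a. a \<in> A \<Longrightarrow> p a \<in> poly_fun) \<Longrightarrow> (\<lambda>z. \<Sum>a\<in>A. p a z) \<in> poly_fun"
  by (induction A rule: finite_induct) (auto intro: poly_fun.intros)

lemma poly_fun_prod:
  "finite A \<Longrightarrow> (\<And>a. a \<in> A \<Longrightarrow> p a \<in> poly_fun) \<Longrightarrow> (\<lambda>z. \<Prod>a\<in>A. p a z) \<in> poly_fun"
  by (induction A rule: finite_induct) (auto intro: poly_fun.intros)

lemma poly_fun_power: "p \<in> poly_fun \<Longrightarrow> (\<lambda>z. p z ^ k) \<in> poly_fun"
  by (induction k) (auto intro: poly_fun.intros)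

lemma partial_eqI:
  "((\<lambda>t. h (z(i := t))) has_field_derivative D) (at (z i)) \<Longrightarrow> partial i h z = D"
  unfolding partial_def by (rule DERIV_imp_deriv)

lemma poly_fun_has_derivative:
  assumes "p \<in> poly_fun"
  shows "\<exists>q\<in>poly_fun. \<forall>z. ((\<lambda>t. p (z(i := t))) has_field_derivative q z) (at (z i))"
  using assms
proof induction
  case (const c)
  show ?case by (intro bexI[of _ "\<lambda>_. 0"]) (auto intro: poly_fun.const)
next
  case (coord j)
  show ?case
    by (cases "j = i")
      (auto intro!: bexI[of _ "\<lambda>_. of_bool (j = i)"] derivative_eq_intros poly_fun.const)
next
  case (add p q)
  then obtain p' q' where "p' \<in> poly_fun" "q' \<in> poly_fun"
    and "\<And>z. ((\<lambda>t. p (z(i := t))) has_field_derivative p' z) (at (z i))"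
    and "\<And>z. ((\<lambda>t. q (z(i := t))) has_field_derivative q' z) (at (z i))"
    by blast
  then show ?case
    by (intro bexI[of _ "\<lambda>z. p' z + q' z"] allI DERIV_add poly_fun.add)
next
  case (mult p q)
  then obtain p' q' where "p' \<in> poly_fun" "q' \<in> poly_fun"
    and p': "\<And>z. ((\<lambda>t. p (z(i := t))) has_field_derivative p' z) (at (z i))"
    and q': "\<And>z. ((\<lambda>t. q (z(i := t))) has_field_derivative q' z) (at (z i))"
    by blast
  have "((\<lambda>t. p (z(i := t)) * q (z(i := t))) has_field_derivative p' z * q z + q' z * p z) (at (z i))"
    for z using DERIV_mult[OF p'[of z] q'[of z]] by simp
  with mult.hyps \<open>p' \<in> poly_fun\<close> \<open>q' \<in> poly_fun\<close> show ?case
    by (intro bexI[of _ "\<lambda>z. p' z * q z + q' z * p z"] allI poly_fun.add poly_fun.mult) assumption+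
qed

lemma
  assumes "p \<in> poly_fun"
  shows poly_fun_partial: "partial i p \<in> poly_fun"
    and has_field_derivative_partial:
      "((\<lambda>t. p (z(i := t))) has_field_derivative partial i p z) (at (z i))"
proof -
  obtain q where q: "q \<in> poly_fun" "\<And>z. ((\<lambda>t. p (z(i := t))) has_field_derivative q z) (at (z i))"
    using poly_fun_has_derivative[OF assms] by blast
  then have "partial i p = q"
    by (auto intro: partial_eqI)
  with q show "partial i p \<in> poly_fun"
    and "((\<lambda>t. p (z(i := t))) has_field_derivative partial i p z) (at (z i))"
    by simp_all
qed

lemma partial_const [simp]: "partial i (\<lambda>_. c) = (\<lambda>_. 0)"
  by (intro ext partial_eqI) simp

lemma partial_coord: "partial i (\<lambda>z. z j) = (\<lambda>_. of_bool (j = i))"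
  by (intro ext partial_eqI) (auto intro!: derivative_eq_intros)

lemma partial_add:
  "p \<in> poly_fun \<Longrightarrow> q \<in> poly_fun \<Longrightarrow>
    partial i (\<lambda>z. p z + q z) = (\<lambda>z. partial i p z + partial i q z)"
  by (intro ext partial_eqI DERIV_add has_field_derivative_partial)

lemma partial_diff:
  "p \<in> poly_fun \<Longrightarrow> q \<in> poly_fun \<Longrightarrow>
    partial i (\<lambda>z. p z - q z) = (\<lambda>z. partial i p z - partial i q z)"
  by (intro ext partial_eqI DERIV_diff has_field_derivative_partial)

lemma partial_cmult:
  "p \<in> poly_fun \<Longrightarrow> partial i (\<lambda>z. c * p z) = (\<lambda>z. c * partial i p z)"
  by (intro ext partial_eqI DERIV_cmult has_field_derivative_partial)

lemma partial_mult:
  assumes "p \<in> poly_fun" "q \<in> poly_fun"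
  shows "partial i (\<lambda>z. p z * q z) = (\<lambda>z. partial i p z * q z + p z * partial i q z)"
proof (intro ext partial_eqI)
  fix z
  show "((\<lambda>t. p (z(i := t)) * q (z(i := t))) has_field_derivative
      partial i p z * q z + p z * partial i q z) (at (z i))"
    using DERIV_mult[OF has_field_derivative_partial[OF assms(1)] has_field_derivative_partial[OF assms(2)],
        of z i z i]
    by (simp add: mult.commute)
qed

lemma partial_commute:
  "p \<in> poly_fun \<Longrightarrow> partial i (partial j p) = partial j (partial i p)"
proof (induction rule: poly_fun.induct)
  case (mult p q)
  then show ?case
    by (simp add: partial_mult partial_add poly_fun_partial poly_fun.intros algebra_simps)
qed (simp_all add: partial_coord partial_add poly_fun_partial)

section \<open>Rational functions with a fixed denominator\<close>

locale rational_functions =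
  fixes F :: "(nat \<Rightarrow> complex) \<Rightarrow> complex"
  assumes F_poly_fun: "F \<in> poly_fun"
begin

definition nonzero_locus :: "(nat \<Rightarrow> complex) set" where
  "nonzero_locus = {z. F z \<noteq> 0}"

text \<open>Values off the nonzero locus are irrelevant: the locus is open along every coordinate
  line, so partial derivatives on it do not see them.\<close>
definition rat_funs :: "((nat \<Rightarrow> complex) \<Rightarrow> complex) set" where
  "rat_funs = {h. \<exists>p\<in>poly_fun. \<exists>k. \<forall>w\<in>nonzero_locus. h w = p w / F w ^ k}"

definition partial_numer :: "nat \<Rightarrow> ((nat \<Rightarrow> complex) \<Rightarrow> complex) \<Rightarrow> nat \<Rightarrow> (nat \<Rightarrow> complex) \<Rightarrow> complex"
  where "partial_numer i p k = (\<lambda>w. partial i p w * F w - of_nat k * (p w * partial i F w))"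

lemma eventually_nonzero_locus:
  assumes "w \<in> nonzero_locus"
  shows "eventually (\<lambda>t. w(i := t) \<in> nonzero_locus) (nhds (w i))"
proof -
  have "((\<lambda>t. F (w(i := t))) \<longlongrightarrow> F w) (at (w i))"
    using DERIV_isCont[OF has_field_derivative_partial[OF F_poly_fun]] by (simp add: isCont_def)
  then have "eventually (\<lambda>t. F (w(i := t)) \<noteq> 0) (at (w i))"
    using assms by (auto simp: nonzero_locus_def intro: tendsto_imp_eventually_ne)
  then show ?thesis
    using assms by (simp add: eventually_nhds_conv_at nonzero_locus_def)
qed

lemma partial_cong:
  assumes "\<forall>w\<in>nonzero_locus. h1 w = h2 w"
  shows "\<forall>w\<in>nonzero_locus. partial i h1 w = partial i h2 w"
proof
  fix w assume "w \<in> nonzero_locus"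
  then have "eventually (\<lambda>t. h1 (w(i := t)) = h2 (w(i := t))) (nhds (w i))"
    using eventually_nonzero_locus assms by (blast intro: eventually_mono)
  then show "partial i h1 w = partial i h2 w"
    unfolding partial_def by (rule deriv_cong_ev) simp
qed

lemma funpow_partial_cong:
  "\<forall>w\<in>nonzero_locus. h1 w = h2 w \<Longrightarrow>
    \<forall>w\<in>nonzero_locus. (partial j ^^ k) h1 w = (partial j ^^ k) h2 w"
  by (induction k) (simp_all add: partial_cong)

lemma has_field_derivative_quotient:
  assumes p: "p \<in> poly_fun" and w: "w \<in> nonzero_locus"
  shows "((\<lambda>t. p (w(i := t)) / F (w(i := t)) ^ k) has_field_derivative
          partial_numer i p k w / F w ^ (k + 1)) (at (w i))"
proof -
  have Fw: "F w \<noteq> 0"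
    using w by (simp add: nonzero_locus_def)
  have "((\<lambda>t. p (w(i := t)) / F (w(i := t)) ^ k) has_field_derivative
      (partial i p w * F w ^ k - p w * (of_nat k * (partial i F w * F w ^ (k - 1)))) / (F w ^ k * F w ^ k))
      (at (w i))"
    using DERIV_divide[OF has_field_derivative_partial[OF p, of w i]
        DERIV_power[OF has_field_derivative_partial[OF F_poly_fun, of w i], of k]] Fw
    by simp
  moreover have "(partial i p w * F w ^ k - p w * (of_nat k * (partial i F w * F w ^ (k - 1)))) /
      (F w ^ k * F w ^ k) = partial_numer i p k w / F w ^ (k + 1)"
  proof (cases k)
    case (Suc k')
    have "partial i p w * F w ^ k - p w * (of_nat k * (partial i F w * F w ^ (k - 1))) =
        F w ^ k' * partial_numer i p k w"
      and "F w ^ k * F w ^ k = F w ^ k' * F w ^ (k + 1)"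
      by (simp_all add: Suc partial_numer_def algebra_simps)
    then show ?thesis
      using Fw by simp
  qed (use Fw in \<open>simp add: partial_numer_def\<close>)
  ultimately show ?thesis
    by simp
qed

lemma
  assumes p: "p \<in> poly_fun" and h: "\<forall>w\<in>nonzero_locus. h w = p w / F w ^ k"
    and w: "w \<in> nonzero_locus"
  shows has_field_derivative_rat_fun: "((\<lambda>t. h (w(i := t))) has_field_derivative
          partial_numer i p k w / F w ^ (k + 1)) (at (w i))"
    and partial_rat_fun: "partial i h w = partial_numer i p k w / F w ^ (k + 1)"
proof -
  have "eventually (\<lambda>t. p (w(i := t)) / F (w(i := t)) ^ k = h (w(i := t))) (nhds (w i))"
    using eventually_nonzero_locus[OF w, of i] h by (auto elim: eventually_mono)
  from DERIV_cong_ev[OF refl this refl] has_field_derivative_quotient[OF p w]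
  show "((\<lambda>t. h (w(i := t))) has_field_derivative
      partial_numer i p k w / F w ^ (k + 1)) (at (w i))"
    by (rule iffD1)
  then show "partial i h w = partial_numer i p k w / F w ^ (k + 1)"
    by (rule partial_eqI)
qed

lemma poly_fun_partial_numer: "p \<in> poly_fun \<Longrightarrow> partial_numer i p k \<in> poly_fun"
  unfolding partial_numer_def
  by (intro poly_fun_diff poly_fun_cmult poly_fun.mult poly_fun_partial F_poly_fun)

lemma rat_funs_partial: "h \<in> rat_funs \<Longrightarrow> partial i h \<in> rat_funs"
  unfolding rat_funs_def using partial_rat_fun poly_fun_partial_numer by blast

lemma partial_inverse:
  assumes "z \<in> nonzero_locus"
  shows "partial i (\<lambda>w. 1 / F w) z = - partial i F z / F z ^ 2"
proof -
  have "\<forall>w\<in>nonzero_locus. 1 / F w = (\<lambda>_. 1) w / F w ^ 1"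
    by simp
  from partial_rat_fun[OF poly_fun.const this assms] show ?thesis
    by (simp add: partial_numer_def power2_eq_square)
qed

lemma has_field_derivative_partial_rat_fun:
  assumes "h \<in> rat_funs" "w \<in> nonzero_locus"
  shows "((\<lambda>t. h (w(i := t))) has_field_derivative partial i h w) (at (w i))"
proof -
  obtain p k where "p \<in> poly_fun" "\<forall>w\<in>nonzero_locus. h w = p w / F w ^ k"
    using assms(1) unfolding rat_funs_def by blast
  with assms(2) show ?thesis
    using has_field_derivative_rat_fun partial_rat_fun by metis
qed

lemma partial_partial_numer:
  assumes p: "p \<in> poly_fun"
  shows "partial i (partial_numer j p k) = (\<lambda>w.
      partial i (partial j p) w * F w + partial j p w * partial i F w
      - of_nat k * (partial i p w * partial j F w + p w * partial i (partial j F) w))"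
  using p F_poly_fun
  by (simp add: partial_numer_def partial_diff partial_cmult partial_mult poly_fun_partial
      poly_fun.mult poly_fun_cmult)

lemma partial_commute_rat_fun:
  assumes h: "h \<in> rat_funs" and w: "w \<in> nonzero_locus"
  shows "partial i (partial j h) w = partial j (partial i h) w"
proof -
  obtain p k where p: "p \<in> poly_fun" and hp: "\<forall>w\<in>nonzero_locus. h w = p w / F w ^ k"
    using h unfolding rat_funs_def by blast
  have second: "partial i (partial j h) w =
      partial_numer i (partial_numer j p k) (k + 1) w / F w ^ (k + 1 + 1)" for i j
  proof -
    have "\<forall>w\<in>nonzero_locus. partial i (partial j h) w =
        partial i (\<lambda>w. partial_numer j p k w / F w ^ (k + 1)) w"
      by (rule partial_cong) (use partial_rat_fun[OF p hp] in blast)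
    with w have "partial i (partial j h) w =
        partial i (\<lambda>w. partial_numer j p k w / F w ^ (k + 1)) w"
      by blast
    also have "\<dots> = partial_numer i (partial_numer j p k) (k + 1) w / F w ^ (k + 1 + 1)"
      by (rule partial_rat_fun[OF poly_fun_partial_numer[OF p] _ w]) simp
    finally show ?thesis .
  qed
  show ?thesis
    unfolding second partial_numer_def[of _ "partial_numer _ p k"] partial_partial_numer[OF p]
    by (simp add: partial_numer_def partial_commute[OF p] partial_commute[OF F_poly_fun]
        algebra_simps)
qed

end

definition dpow_list :: "expo \<Rightarrow> nat list \<Rightarrow> ((nat \<Rightarrow> complex) \<Rightarrow> complex) \<Rightarrow> (nat \<Rightarrow> complex) \<Rightarrow> complex"
  where "dpow_list b L h = foldr (\<lambda>i h. (partial i ^^ b i) h) L h"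

lemma dpow_list_Nil [simp]: "dpow_list b [] h = h"
  by (simp add: dpow_list_def)

lemma dpow_list_Cons [simp]: "dpow_list b (j # L) h = (partial j ^^ b j) (dpow_list b L h)"
  by (simp add: dpow_list_def)

lemma dpow_eq_dpow_list: "dpow n b h = dpow_list b [0..<n] h"
  by (simp add: dpow_def dpow_list_def)

lemma dpow_list_cong: "(\<And>j. j \<in> set L \<Longrightarrow> b j = b' j) \<Longrightarrow> dpow_list b L h = dpow_list b' L h"
  by (induction L) auto

lemma dpow_zero [simp]: "dpow n (\<lambda>_. 0) h = h"
proof -
  have "dpow_list (\<lambda>_. 0) L h = h" for L
    by (induction L) auto
  then show ?thesis
    by (simp add: dpow_eq_dpow_list)
qed

context rational_functions
begin

lemma rat_funs_funpow_partial: "h \<in> rat_funs \<Longrightarrow> (partial j ^^ k) h \<in> rat_funs"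
  by (induction k) (auto intro: rat_funs_partial)

lemma rat_funs_dpow_list: "h \<in> rat_funs \<Longrightarrow> dpow_list b L h \<in> rat_funs"
  by (induction L) (auto intro: rat_funs_funpow_partial)

lemma rat_funs_dpow: "h \<in> rat_funs \<Longrightarrow> dpow n b h \<in> rat_funs"
  unfolding dpow_eq_dpow_list by (rule rat_funs_dpow_list)

lemma partial_funpow_partial_commute:
  assumes "h \<in> rat_funs"
  shows "\<forall>w\<in>nonzero_locus. partial i ((partial j ^^ k) h) w = (partial j ^^ k) (partial i h) w"
proof (induction k)
  case (Suc k)
  then have "\<forall>w\<in>nonzero_locus.
      partial j (partial i ((partial j ^^ k) h)) w = partial j ((partial j ^^ k) (partial i h)) w"
    by (rule partial_cong)
  then show ?case
    using partial_commute_rat_fun[OF rat_funs_funpow_partial[OF assms]] by simp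
qed simp

lemma partial_dpow_list:
  assumes "distinct L" "i \<in> set L" "h \<in> rat_funs"
  shows "\<forall>w\<in>nonzero_locus. partial i (dpow_list b L h) w = dpow_list (b(i := Suc (b i))) L h w"
  using assms(1,2)
proof (induction L)
  case (Cons j L)
  show ?case
  proof (cases "j = i")
    case True
    with Cons.prems have "dpow_list (b(i := Suc (b i))) L h = dpow_list b L h"
      by (intro dpow_list_cong) auto
    with True show ?thesis
      by (simp del: fun_upd_apply add: fun_upd_same)
  next
    case False
    with Cons.prems have "\<forall>w\<in>nonzero_locus. (partial j ^^ b j) (partial i (dpow_list b L h)) w =
        (partial j ^^ b j) (dpow_list (b(i := Suc (b i))) L h) w"
      by (intro funpow_partial_cong Cons.IH) auto
    with False show ?thesis
      using partial_funpow_partial_commute[OF rat_funs_dpow_list[OF assms(3)]]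
      by (simp del: fun_upd_apply add: fun_upd_other)
  qed
qed simp

lemma partial_dpow:
  "i < n \<Longrightarrow> h \<in> rat_funs \<Longrightarrow> w \<in> nonzero_locus \<Longrightarrow>
    partial i (dpow n b h) w = dpow n (b(i := Suc (b i))) h w"
  unfolding dpow_eq_dpow_list using partial_dpow_list[of "[0..<n]" i h b] by simp

end

section \<open>Homogeneity under dilations\<close>

definition dilate :: "complex \<Rightarrow> (nat \<Rightarrow> complex) \<Rightarrow> nat \<Rightarrow> complex" where
  "dilate t w = (\<lambda>j. t * w j)"

lemma dilate_fun_upd: "t \<noteq> 0 \<Longrightarrow> (dilate t w)(i := s) = dilate t (w(i := s / t))"
  by (auto simp: dilate_def)

lemma dilate_dilate_inverse: "t \<noteq> 0 \<Longrightarrow> dilate (1 / t) (dilate t w) = w"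
  by (auto simp: dilate_def)

locale homogeneous_denominator = rational_functions +
  fixes D :: nat
  assumes F_dilate: "\<And>t w. F (dilate t w) = t ^ D * F w"
begin

definition neg_homogeneous :: "nat \<Rightarrow> ((nat \<Rightarrow> complex) \<Rightarrow> complex) \<Rightarrow> bool" where
  "neg_homogeneous k h \<longleftrightarrow> (\<forall>w\<in>nonzero_locus. \<forall>t. t \<noteq> 0 \<longrightarrow> t ^ k * h (dilate t w) = h w)"

lemma dilate_nonzero_locus: "w \<in> nonzero_locus \<Longrightarrow> t \<noteq> 0 \<Longrightarrow> dilate t w \<in> nonzero_locus"
  by (simp add: nonzero_locus_def F_dilate)

lemma neg_homogeneous_partial:
  assumes h: "h \<in> rat_funs" and hk: "neg_homogeneous k h"
  shows "neg_homogeneous (Suc k) (partial i h)"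
  unfolding neg_homogeneous_def
proof (intro ballI allI impI)
  fix w and t :: complex
  assume w: "w \<in> nonzero_locus" and t: "t \<noteq> 0"
  define z where "z = dilate t w"
  have z: "z \<in> nonzero_locus"
    using dilate_nonzero_locus[OF w t] by (simp add: z_def)
  have "((\<lambda>s. h (w(i := s))) has_field_derivative partial i h w) (at (w i))"
    by (rule has_field_derivative_partial_rat_fun[OF h w])
  moreover have "((\<lambda>s. s / t) has_field_derivative 1 / t) (at (z i))"
    using t by (auto intro!: derivative_eq_intros)
  moreover have "z i / t = w i"
    using t by (simp add: z_def dilate_def)
  ultimately have "((\<lambda>s. h (w(i := s / t))) has_field_derivative partial i h w * (1 / t)) (at (z i))"
    using DERIV_chain2[of "\<lambda>s. h (w(i := s))" "partial i h w" "\<lambda>s. s / t" "z i" "1 / t" UNIV]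
    by simp
  then have "((\<lambda>s. h (w(i := s / t)) / t ^ k) has_field_derivative
      partial i h w * (1 / t) / t ^ k) (at (z i))"
    by (rule DERIV_cdivide)
  moreover have ev: "eventually (\<lambda>s. h (w(i := s / t)) / t ^ k = h (z(i := s))) (nhds (z i))"
    using eventually_nonzero_locus[OF z]
  proof (rule eventually_mono)
    fix s assume s: "z(i := s) \<in> nonzero_locus"
    have zs: "z(i := s) = dilate t (w(i := s / t))"
      unfolding z_def by (rule dilate_fun_upd[OF t])
    then have "w(i := s / t) \<in> nonzero_locus"
      using dilate_nonzero_locus[OF s, of "1 / t"] dilate_dilate_inverse[OF t] t by simp
    then show "h (w(i := s / t)) / t ^ k = h (z(i := s))"
      using hk t zs unfolding neg_homogeneous_def by (simp add: field_simps)
  qed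
  ultimately have "((\<lambda>s. h (z(i := s))) has_field_derivative partial i h w * (1 / t) / t ^ k) (at (z i))"
    using DERIV_cong_ev[OF refl ev refl] by blast
  then show "t ^ Suc k * partial i h (dilate t w) = partial i h w"
    using t partial_eqI unfolding z_def by (fastforce simp: field_simps)
qed

lemma neg_homogeneous_funpow_partial:
  "h \<in> rat_funs \<Longrightarrow> neg_homogeneous k h \<Longrightarrow> neg_homogeneous (k + m) ((partial j ^^ m) h)"
  by (induction m) (auto intro: neg_homogeneous_partial rat_funs_funpow_partial)

lemma neg_homogeneous_dpow_list:
  "h \<in> rat_funs \<Longrightarrow> neg_homogeneous k h \<Longrightarrow>
    neg_homogeneous (k + sum_list (map b L)) (dpow_list b L h)"
proof (induction L)
  case (Cons j L)
  then have "neg_homogeneous (k + sum_list (map b L) + b j) ((partial j ^^ b j) (dpow_list b L h))"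
    by (intro neg_homogeneous_funpow_partial rat_funs_dpow_list)
  then show ?case
    by (simp add: add_ac)
qed simp

lemma neg_homogeneous_dpow:
  "h \<in> rat_funs \<Longrightarrow> neg_homogeneous k h \<Longrightarrow> neg_homogeneous (k + expo_deg n b) (dpow n b h)"
  using neg_homogeneous_dpow_list[of h k b "[0..<n]"]
  by (simp add: dpow_eq_dpow_list expo_deg_def interv_sum_list_conv_sum_set_nat atLeast0LessThan)

lemma rat_funs_inverse: "(\<lambda>w. 1 / F w) \<in> rat_funs"
  unfolding rat_funs_def by (auto intro!: bexI[of _ "\<lambda>_. 1"] exI[of _ 1] poly_fun.const)

lemma neg_homogeneous_inverse: "neg_homogeneous D (\<lambda>w. 1 / F w)"
  by (auto simp: neg_homogeneous_def F_dilate nonzero_locus_def)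

end

section \<open>The action of the Weyl algebra\<close>

definition xpow :: "nat \<Rightarrow> expo \<Rightarrow> (nat \<Rightarrow> complex) \<Rightarrow> complex" where
  "xpow n a z = (\<Prod>j<n. z j ^ a j)"

definition weyl_sum :: "weyl \<Rightarrow> (expo \<times> expo \<Rightarrow> complex) \<Rightarrow> complex" where
  "weyl_sum P G = (\<Sum>m | P m \<noteq> 0. P m * G m)"

definition inc_x :: "nat \<Rightarrow> expo \<times> expo \<Rightarrow> expo \<times> expo" where
  "inc_x i m = ((fst m)(i := Suc (fst m i)), snd m)"

definition inc_d :: "nat \<Rightarrow> expo \<times> expo \<Rightarrow> expo \<times> expo" where
  "inc_d i m = (fst m, (snd m)(i := Suc (snd m i)))"

definition dec_x :: "nat \<Rightarrow> expo \<times> expo \<Rightarrow> expo \<times> expo" where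
  "dec_x i m = ((fst m)(i := fst m i - 1), snd m)"

lemma weyl_act_eq_weyl_sum:
  "weyl_act n P h z = weyl_sum P (\<lambda>m. xpow n (fst m) z * dpow n (snd m) h z)"
  by (simp add: weyl_act_def weyl_sum_def xpow_def mult.assoc)

lemma weyl_sum_superset:
  assumes "finite T" "{m. P m \<noteq> 0} \<subseteq> T"
  shows "weyl_sum P G = (\<Sum>m\<in>T. P m * G m)"
  unfolding weyl_sum_def by (rule sum.mono_neutral_left[OF assms]) auto

lemma weyl_sum_add:
  assumes "finite {m. P m \<noteq> 0}" "finite {m. Q m \<noteq> 0}"
  shows "weyl_sum (\<lambda>m. P m + Q m) G = weyl_sum P G + weyl_sum Q G"
proof -
  let ?T = "{m. P m \<noteq> 0} \<union> {m. Q m \<noteq> 0}"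
  have "weyl_sum (\<lambda>m. P m + Q m) G = (\<Sum>m\<in>?T. (P m + Q m) * G m)"
    by (rule weyl_sum_superset) (use assms in auto)
  also have "\<dots> = (\<Sum>m\<in>?T. P m * G m) + (\<Sum>m\<in>?T. Q m * G m)"
    by (simp add: sum.distrib algebra_simps)
  also have "\<dots> = weyl_sum P G + weyl_sum Q G"
    using assms by (simp add: weyl_sum_superset[of ?T P] weyl_sum_superset[of ?T Q])
  finally show ?thesis .
qed

lemma weyl_sum_smult:
  assumes "finite {m. P m \<noteq> 0}"
  shows "weyl_sum (\<lambda>m. c * P m) G = c * weyl_sum P G"
proof -
  have "weyl_sum (\<lambda>m. c * P m) G = (\<Sum>m | P m \<noteq> 0. c * P m * G m)"
    by (rule weyl_sum_superset) (use assms in auto)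
  then show ?thesis
    by (simp add: weyl_sum_def sum_distrib_left mult.assoc)
qed

lemma inj_inc_x: "inj (inc_x i)"
  by (rule injI) (auto simp: inc_x_def fun_eq_iff prod_eq_iff split: if_splits)

lemma inj_inc_d: "inj (inc_d i)"
  by (rule injI) (auto simp: inc_d_def fun_eq_iff prod_eq_iff split: if_splits)

lemma inj_on_dec_x: "inj_on (dec_x i) {m. 0 < fst m i}"
  by (rule inj_onI) (auto simp: dec_x_def fun_eq_iff prod_eq_iff split: if_splits, metis Suc_pred)

lemma lmul_x_apply:
  "lmul_x i P m = (if 0 < fst m i then P ((fst m)(i := fst m i - 1), snd m) else 0)"
  by (cases m) (simp add: lmul_x_def)

lemma lmul_d_apply:
  "lmul_d i P m = (if 0 < snd m i then P (fst m, (snd m)(i := snd m i - 1)) else 0)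
     + of_nat (fst m i + 1) * P ((fst m)(i := fst m i + 1), snd m)"
  by (cases m) (simp add: lmul_d_def)

lemma support_lmul_x: "{m. lmul_x i P m \<noteq> 0} \<subseteq> inc_x i ` {m. P m \<noteq> 0}"
proof
  fix m assume "m \<in> {m. lmul_x i P m \<noteq> 0}"
  then have "0 < fst m i" "P ((fst m)(i := fst m i - 1), snd m) \<noteq> 0"
    by (auto simp: lmul_x_apply split: if_splits)
  moreover from this have "m = inc_x i ((fst m)(i := fst m i - 1), snd m)"
    by (auto simp: inc_x_def)
  ultimately show "m \<in> inc_x i ` {m. P m \<noteq> 0}"
    by blast
qed

lemma support_lmul_d:
  "{m. lmul_d i P m \<noteq> 0} \<subseteq> inc_d i ` {m. P m \<noteq> 0} \<union> dec_x i ` {m. P m \<noteq> 0 \<and> 0 < fst m i}"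
proof
  fix m assume "m \<in> {m. lmul_d i P m \<noteq> 0}"
  then have "(0 < snd m i \<and> P (fst m, (snd m)(i := snd m i - 1)) \<noteq> 0) \<or>
      P ((fst m)(i := fst m i + 1), snd m) \<noteq> 0"
    by (auto simp: lmul_d_apply split: if_splits)
  then show "m \<in> inc_d i ` {m. P m \<noteq> 0} \<union> dec_x i ` {m. P m \<noteq> 0 \<and> 0 < fst m i}"
  proof (elim disjE conjE)
    assume "0 < snd m i" "P (fst m, (snd m)(i := snd m i - 1)) \<noteq> 0"
    moreover from this have "m = inc_d i (fst m, (snd m)(i := snd m i - 1))"
      by (auto simp: inc_d_def)
    ultimately show ?thesis
      by blast
  next
    assume "P ((fst m)(i := fst m i + 1), snd m) \<noteq> 0"
    moreover have "m = dec_x i ((fst m)(i := fst m i + 1), snd m)"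
      by (auto simp: dec_x_def)
    ultimately show ?thesis
      by force
  qed
qed

lemma weyl_sum_lmul_x:
  assumes "finite {m. P m \<noteq> 0}"
  shows "weyl_sum (lmul_x i P) G = weyl_sum P (\<lambda>m. G (inc_x i m))"
proof -
  have "weyl_sum (lmul_x i P) G = (\<Sum>m\<in>inc_x i ` {m. P m \<noteq> 0}. lmul_x i P m * G m)"
    using assms support_lmul_x by (intro weyl_sum_superset) auto
  also have "\<dots> = (\<Sum>m | P m \<noteq> 0. lmul_x i P (inc_x i m) * G (inc_x i m))"
    by (simp add: sum.reindex[OF inj_on_subset[OF inj_inc_x]])
  also have "\<dots> = weyl_sum P (\<lambda>m. G (inc_x i m))"
    by (simp add: weyl_sum_def lmul_x_apply inc_x_def)
  finally show ?thesis .
qed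

lemma sum_reindex_superset:
  assumes "finite T" "inj_on \<phi> A" "\<phi> ` A \<subseteq> T" "\<And>m. m \<in> T \<Longrightarrow> m \<notin> \<phi> ` A \<Longrightarrow> G m = 0"
  shows "sum G T = sum (G \<circ> \<phi>) A"
proof -
  have "sum G T = sum G (\<phi> ` A)"
    using assms by (intro sum.mono_neutral_right) auto
  also have "\<dots> = sum (G \<circ> \<phi>) A"
    by (rule sum.reindex[OF assms(2)])
  finally show ?thesis .
qed

lemma weyl_sum_lmul_d:
  assumes A: "finite {m. P m \<noteq> 0}"
  shows "weyl_sum (lmul_d i P) G =
    weyl_sum P (\<lambda>m. G (inc_d i m) + of_nat (fst m i) * G (dec_x i m))"
proof -
  define A' where "A' = {m. P m \<noteq> 0 \<and> 0 < fst m i}"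
  define T where "T = inc_d i ` {m. P m \<noteq> 0} \<union> dec_x i ` A'"
  define G1 where
    "G1 m = (if 0 < snd m i then P (fst m, (snd m)(i := snd m i - 1)) else 0) * G m" for m
  define G2 where
    "G2 m = of_nat (fst m i + 1) * P ((fst m)(i := fst m i + 1), snd m) * G m" for m
  have A': "finite A'" "A' \<subseteq> {m. P m \<noteq> 0}"
    using A by (auto simp: A'_def intro: finite_subset)
  have T: "finite T"
    using A A' by (simp add: T_def)
  have "weyl_sum (lmul_d i P) G = (\<Sum>m\<in>T. lmul_d i P m * G m)"
    using T support_lmul_d by (intro weyl_sum_superset) (auto simp: T_def A'_def)
  also have "\<dots> = sum G1 T + sum G2 T"
    by (simp add: G1_def G2_def lmul_d_apply sum.distrib[symmetric] algebra_simps)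
  also have "sum G1 T = (\<Sum>m | P m \<noteq> 0. P m * G (inc_d i m))"
  proof -
    have "sum G1 T = sum (G1 \<circ> inc_d i) {m. P m \<noteq> 0}"
    proof (rule sum_reindex_superset[OF T inj_on_subset[OF inj_inc_d]])
      fix m assume "m \<in> T" "m \<notin> inc_d i ` {m. P m \<noteq> 0}"
      moreover have "m = inc_d i (fst m, (snd m)(i := snd m i - 1))" if "0 < snd m i"
        using that by (auto simp: inc_d_def)
      ultimately show "G1 m = 0"
        by (force simp: G1_def)
    qed (auto simp: T_def)
    then show ?thesis
      by (simp add: G1_def inc_d_def)
  qed
  also have "sum G2 T = (\<Sum>m | P m \<noteq> 0. P m * (of_nat (fst m i) * G (dec_x i m)))"
  proof -
    have "sum G2 T = sum (G2 \<circ> dec_x i) A'"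
    proof (rule sum_reindex_superset[OF T inj_on_subset[OF inj_on_dec_x]])
      fix m assume "m \<in> T" "m \<notin> dec_x i ` A'"
      moreover have "m = dec_x i ((fst m)(i := fst m i + 1), snd m)"
        by (auto simp: dec_x_def)
      ultimately show "G2 m = 0"
        by (force simp: G2_def A'_def)
    qed (auto simp: T_def A'_def)
    also have "\<dots> = (\<Sum>m\<in>A'. P m * (of_nat (fst m i) * G (dec_x i m)))"
      by (intro sum.cong) (auto simp: G2_def dec_x_def A'_def)
    also have "\<dots> = (\<Sum>m | P m \<noteq> 0. P m * (of_nat (fst m i) * G (dec_x i m)))"
      using A A' by (intro sum.mono_neutral_left) (auto simp: A'_def)
    finally show ?thesis .
  qed
  finally show ?thesis
    by (simp add: weyl_sum_def sum.distrib[symmetric] algebra_simps)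
qed

lemma weyl_elems_finite_support: "P \<in> weyl_elems n \<Longrightarrow> finite {m. P m \<noteq> 0}"
  by (simp add: weyl_elems_def)

lemma weyl_elemsI:
  "finite {m. P m \<noteq> 0} \<Longrightarrow> (\<And>a b j. P (a, b) \<noteq> 0 \<Longrightarrow> n \<le> j \<Longrightarrow> a j = 0 \<and> b j = 0) \<Longrightarrow>
    P \<in> weyl_elems n"
  unfolding weyl_elems_def by blast

lemma weyl_elemsD: "P \<in> weyl_elems n \<Longrightarrow> P (a, b) \<noteq> 0 \<Longrightarrow> n \<le> j \<Longrightarrow> a j = 0 \<and> b j = 0"
  unfolding weyl_elems_def by blast

lemma weyl_elems_zero: "(\<lambda>_. 0) \<in> weyl_elems n"
  by (simp add: weyl_elems_def)

lemma weyl_elems_one: "weyl_one \<in> weyl_elems n"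
proof (rule weyl_elemsI)
  have "{m. weyl_one m \<noteq> 0} \<subseteq> {(\<lambda>_. 0, \<lambda>_. 0)}"
    by (auto simp: weyl_one_def split: if_splits)
  then show "finite {m. weyl_one m \<noteq> 0}"
    by (rule finite_subset) simp
qed (auto simp: weyl_one_def split: if_splits)

lemma weyl_elems_add:
  assumes "P \<in> weyl_elems n" "Q \<in> weyl_elems n"
  shows "(\<lambda>m. P m + Q m) \<in> weyl_elems n"
proof (rule weyl_elemsI)
  have "{m. P m + Q m \<noteq> 0} \<subseteq> {m. P m \<noteq> 0} \<union> {m. Q m \<noteq> 0}"
    by auto
  then show "finite {m. P m + Q m \<noteq> 0}"
    using assms by (auto intro: finite_subset weyl_elems_finite_support)
next
  fix a b j assume "P (a, b) + Q (a, b) \<noteq> 0" "n \<le> j"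
  then have "P (a, b) \<noteq> 0 \<or> Q (a, b) \<noteq> 0"
    by auto
  with \<open>n \<le> j\<close> show "a j = 0 \<and> b j = 0"
    using weyl_elemsD[OF assms(1)] weyl_elemsD[OF assms(2)] by blast
qed

lemma weyl_elems_smult: "P \<in> weyl_elems n \<Longrightarrow> (\<lambda>m. c * P m) \<in> weyl_elems n"
  by (rule weyl_elemsI)
    (auto intro: finite_subset[OF _ weyl_elems_finite_support] dest: weyl_elemsD)

lemma weyl_elems_sum:
  "finite K \<Longrightarrow> (\<And>k. k \<in> K \<Longrightarrow> Q k \<in> weyl_elems n) \<Longrightarrow> (\<lambda>m. \<Sum>k\<in>K. Q k m) \<in> weyl_elems n"
  by (induction K rule: finite_induct) (auto intro: weyl_elems_zero weyl_elems_add)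

lemma weyl_elems_restrict: "P \<in> weyl_elems n \<Longrightarrow> (\<lambda>m. if Q m then P m else 0) \<in> weyl_elems n"
  by (intro weyl_elemsI) (auto intro: finite_subset[OF _ weyl_elems_finite_support] dest: weyl_elemsD
      split: if_splits)

lemma weyl_elems_lmul_x:
  assumes P: "P \<in> weyl_elems n" and i: "i < n"
  shows "lmul_x i P \<in> weyl_elems n"
proof (rule weyl_elemsI)
  show "finite {m. lmul_x i P m \<noteq> 0}"
    using finite_subset[OF support_lmul_x] weyl_elems_finite_support[OF P] by blast
next
  fix a b j assume "lmul_x i P (a, b) \<noteq> 0" "n \<le> j"
  with weyl_elemsD[OF P, of "a(i := a i - 1)" b j] i show "a j = 0 \<and> b j = 0"
    by (auto simp: lmul_x_def split: if_splits)
qed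

lemma weyl_elems_lmul_d:
  assumes P: "P \<in> weyl_elems n" and i: "i < n"
  shows "lmul_d i P \<in> weyl_elems n"
proof (rule weyl_elemsI)
  have "finite {m. P m \<noteq> 0 \<and> 0 < fst m i}"
    using weyl_elems_finite_support[OF P] by (auto intro: finite_subset)
  then show "finite {m. lmul_d i P m \<noteq> 0}"
    using finite_subset[OF support_lmul_d] weyl_elems_finite_support[OF P] by blast
next
  fix a b j assume "lmul_d i P (a, b) \<noteq> 0" and j: "n \<le> j"
  then have "P (a, b(i := b i - 1)) \<noteq> 0 \<or> P (a(i := a i + 1), b) \<noteq> 0"
    by (auto simp: lmul_d_def split: if_splits)
  with weyl_elemsD[OF P _ j] i j show "a j = 0 \<and> b j = 0"
    by (metis fun_upd_other leD)
qed

lemma weyl_elems_lmul_s: "Q \<in> weyl_elems n \<Longrightarrow> lmul_s n \<omega> Q \<in> weyl_elems n"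
  unfolding lmul_s_def
  by (intro weyl_elems_sum weyl_elems_smult weyl_elems_lmul_x weyl_elems_lmul_d) auto

lemma weyl_act_zero: "weyl_act n (\<lambda>_. 0) h z = 0"
  by (simp add: weyl_act_def)

lemma weyl_act_add:
  "P \<in> weyl_elems n \<Longrightarrow> Q \<in> weyl_elems n \<Longrightarrow>
    weyl_act n (\<lambda>m. P m + Q m) h z = weyl_act n P h z + weyl_act n Q h z"
  by (simp add: weyl_act_eq_weyl_sum weyl_sum_add weyl_elems_finite_support)

lemma weyl_act_smult:
  "P \<in> weyl_elems n \<Longrightarrow> weyl_act n (\<lambda>m. c * P m) h z = c * weyl_act n P h z"
  by (simp add: weyl_act_eq_weyl_sum weyl_sum_smult weyl_elems_finite_support)

lemma weyl_act_sum:
  "finite K \<Longrightarrow> (\<And>k. k \<in> K \<Longrightarrow> Q k \<in> weyl_elems n) \<Longrightarrow>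
    weyl_act n (\<lambda>m. \<Sum>k\<in>K. Q k m) h z = (\<Sum>k\<in>K. weyl_act n (Q k) h z)"
  by (induction K rule: finite_induct) (simp_all add: weyl_act_zero weyl_act_add weyl_elems_sum)

lemma weyl_act_one: "weyl_act n weyl_one h = h"
proof
  fix z
  have "weyl_act n weyl_one h z = (\<Sum>m\<in>{(\<lambda>_. 0, \<lambda>_. 0)}. weyl_one m * (xpow n (fst m) z * dpow n (snd m) h z))"
    unfolding weyl_act_eq_weyl_sum by (rule weyl_sum_superset) (auto simp: weyl_one_def split: if_splits)
  then show "weyl_act n weyl_one h z = h z"
    by (simp add: weyl_one_def xpow_def)
qed

lemma xpow_split: "i < n \<Longrightarrow> xpow n a z = z i ^ a i * (\<Prod>j\<in>{..<n} - {i}. z j ^ a j)"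
  unfolding xpow_def by (subst prod.remove[of _ i]) auto

lemma xpow_inc:
  assumes "i < n"
  shows "xpow n (a(i := Suc (a i))) z = z i * xpow n a z"
proof -
  have "(\<Prod>j\<in>{..<n} - {i}. z j ^ (a(i := Suc (a i))) j) = (\<Prod>j\<in>{..<n} - {i}. z j ^ a j)"
    by (rule prod.cong) auto
  then show ?thesis
    using xpow_split[OF assms, of "a(i := Suc (a i))"] xpow_split[OF assms, of a] by simp
qed

lemma xpow_dec:
  assumes "i < n"
  shows "z i * (of_nat (a i) * xpow n (a(i := a i - 1)) z) = of_nat (a i) * xpow n a z"
proof (cases "a i = 0")
  case False
  then have "(a(i := a i - 1))(i := Suc ((a(i := a i - 1)) i)) = a"
    by (auto simp: fun_eq_iff)
  then show ?thesis
    using xpow_inc[OF assms, of "a(i := a i - 1)" z] by (simp add: mult.left_commute)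
qed simp

lemma xpow_dilate: "xpow n a (dilate t w) = t ^ expo_deg n a * xpow n a w"
  by (simp add: xpow_def dilate_def expo_deg_def power_mult_distrib prod.distrib power_sum)

lemma has_field_derivative_xpow:
  assumes "i < n"
  shows "((\<lambda>t. xpow n a (z(i := t))) has_field_derivative
    of_nat (a i) * xpow n (a(i := a i - 1)) z) (at (z i))"
proof -
  define R where "R = (\<Prod>j\<in>{..<n} - {i}. z j ^ a j)"
  have "(\<Prod>j\<in>{..<n} - {i}. (z(i := t)) j ^ a j) = R" for t
    unfolding R_def by (rule prod.cong) auto
  then have "xpow n a (z(i := t)) = t ^ a i * R" for t
    using xpow_split[OF assms, of a "z(i := t)"] by simp
  moreover have "(\<Prod>j\<in>{..<n} - {i}. z j ^ (a(i := a i - 1)) j) = R"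
    unfolding R_def by (rule prod.cong) auto
  then have "xpow n (a(i := a i - 1)) z = z i ^ (a i - 1) * R"
    using xpow_split[OF assms, of "a(i := a i - 1)" z] by simp
  moreover have "((\<lambda>t. t ^ a i * R) has_field_derivative of_nat (a i) * z i ^ (a i - 1) * R) (at (z i))"
    by (auto intro!: derivative_eq_intros)
  ultimately show ?thesis
    by (simp add: mult.assoc)
qed

lemma weyl_act_lmul_x:
  assumes "P \<in> weyl_elems n" "i < n"
  shows "weyl_act n (lmul_x i P) h z = z i * weyl_act n P h z"
  using assms
  by (simp add: weyl_act_eq_weyl_sum weyl_sum_lmul_x weyl_elems_finite_support inc_x_def xpow_inc)
    (simp add: weyl_sum_def sum_distrib_left mult.left_commute mult.assoc)

context rational_functions
begin

lemma weyl_act_lmul_d: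
  assumes P: "P \<in> weyl_elems n" and i: "i < n" and h: "h \<in> rat_funs" and z: "z \<in> nonzero_locus"
  shows "weyl_act n (lmul_d i P) h z = partial i (weyl_act n P h) z"
proof -
  let ?G = "\<lambda>w m. xpow n (fst m) w * dpow n (snd m) h w"
  have "((\<lambda>t. P m * ?G (z(i := t)) m) has_field_derivative
      P m * (?G z (inc_d i m) + of_nat (fst m i) * ?G z (dec_x i m))) (at (z i))" for m
  proof -
    have "((\<lambda>t. ?G (z(i := t)) m) has_field_derivative
        of_nat (fst m i) * xpow n ((fst m)(i := fst m i - 1)) z * dpow n (snd m) h z
        + partial i (dpow n (snd m) h) z * xpow n (fst m) z) (at (z i))"
      using DERIV_mult[OF has_field_derivative_xpow[OF i, of "fst m" z]
          has_field_derivative_partial_rat_fun[OF rat_funs_dpow[OF h, of n "snd m"] z, of i]]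
      by simp
    then show ?thesis
      by (rule DERIV_cong[OF DERIV_cmult])
        (simp add: partial_dpow[OF i h z] inc_d_def dec_x_def algebra_simps)
  qed
  then have "((\<lambda>t. weyl_act n P h (z(i := t))) has_field_derivative
      weyl_sum P (\<lambda>m. ?G z (inc_d i m) + of_nat (fst m i) * ?G z (dec_x i m))) (at (z i))"
    unfolding weyl_act_eq_weyl_sum weyl_sum_def by (rule DERIV_sum)
  then have "partial i (weyl_act n P h) z =
      weyl_sum P (\<lambda>m. ?G z (inc_d i m) + of_nat (fst m i) * ?G z (dec_x i m))"
    by (rule partial_eqI)
  also have "\<dots> = weyl_act n (lmul_d i P) h z"
    by (simp add: weyl_act_eq_weyl_sum weyl_sum_lmul_d weyl_elems_finite_support[OF P])
  finally show ?thesis ..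
qed

lemma weyl_act_lmul_s:
  assumes Q: "Q \<in> weyl_elems n" and h: "h \<in> rat_funs" and z: "z \<in> nonzero_locus"
  shows "weyl_act n (lmul_s n \<omega> Q) h z =
    (\<Sum>i<n. complex_of_real (\<omega> i) * (z i * partial i (weyl_act n Q h) z))"
proof -
  have "weyl_act n (lmul_s n \<omega> Q) h z =
      (\<Sum>i<n. weyl_act n (\<lambda>m. complex_of_real (\<omega> i) * lmul_x i (lmul_d i Q) m) h z)"
    unfolding lmul_s_def
    by (rule weyl_act_sum) (auto intro: weyl_elems_smult weyl_elems_lmul_x weyl_elems_lmul_d Q)
  also have "\<dots> = (\<Sum>i<n. complex_of_real (\<omega> i) * (z i * partial i (weyl_act n Q h) z))"
    by (rule sum.cong[OF refl])
      (simp add: Q weyl_act_smult weyl_act_lmul_x weyl_act_lmul_d[OF Q _ h z] weyl_elems_lmul_x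
        weyl_elems_lmul_d)
  finally show ?thesis .
qed

end

context homogeneous_denominator
begin

lemma weyl_act_dilate:
  assumes h: "h \<in> rat_funs" "neg_homogeneous k h" and z: "z \<in> nonzero_locus" and t: "t \<noteq> 0"
  shows "weyl_act n P h (dilate t z) = (\<Sum>m | P m \<noteq> 0. P m * xpow n (fst m) z * dpow n (snd m) h z
      * t powi (int (expo_deg n (fst m)) - int (k + expo_deg n (snd m))))"
  unfolding weyl_act_def xpow_def[symmetric]
proof (rule sum.cong[OF refl])
  fix m :: "expo \<times> expo"
  have "t ^ (k + expo_deg n (snd m)) * dpow n (snd m) h (dilate t z) = dpow n (snd m) h z"
    using neg_homogeneous_dpow[OF h] z t unfolding neg_homogeneous_def by blast
  then have "dpow n (snd m) h (dilate t z) = dpow n (snd m) h z / t ^ (k + expo_deg n (snd m))"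
    using t by (simp add: field_simps)
  moreover have "t powi (int (expo_deg n (fst m)) - int (k + expo_deg n (snd m))) =
      t ^ expo_deg n (fst m) / t ^ (k + expo_deg n (snd m))"
    using t by (simp add: power_int_diff power_int_add power_add)
  ultimately show "P m * xpow n (fst m) (dilate t z) * dpow n (snd m) h (dilate t z) =
      P m * xpow n (fst m) z * dpow n (snd m) h z
      * t powi (int (expo_deg n (fst m)) - int (k + expo_deg n (snd m)))"
    by (simp add: xpow_dilate)
qed

end

section \<open>Polynomials in \<open>s\<close> and b-functions\<close>

lemma lmul_x_linear: "lmul_x i (\<lambda>m. \<Sum>k\<in>K. c k * Q k m) = (\<lambda>m. \<Sum>k\<in>K. c k * lmul_x i (Q k) m)"
  by (rule ext) (simp add: lmul_x_apply)

lemma lmul_d_linear: "lmul_d i (\<lambda>m. \<Sum>k\<in>K. c k * Q k m) = (\<lambda>m. \<Sum>k\<in>K. c k * lmul_d i (Q k) m)"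
  by (rule ext) (simp add: lmul_d_apply sum.distrib sum_distrib_left algebra_simps)

lemma lmul_s_linear:
  "lmul_s n \<omega> (\<lambda>m. \<Sum>k\<in>K. c k * Q k m) = (\<lambda>m. \<Sum>k\<in>K. c k * lmul_s n \<omega> (Q k) m)"
  unfolding lmul_s_def lmul_d_linear lmul_x_linear
  by (rule ext) (simp add: sum_distrib_left algebra_simps sum.swap[of _ K])

lemma eval_s_eq_sum_atMost:
  assumes "degree p \<le> N"
  shows "eval_s n \<omega> p = (\<lambda>m. \<Sum>k\<le>N. coeff p k * (lmul_s n \<omega> ^^ k) weyl_one m)"
  unfolding eval_s_def
  by (intro ext sum.mono_neutral_left) (use assms in \<open>auto simp: coeff_eq_0\<close>)

lemma eval_s_add: "eval_s n \<omega> (p + q) = (\<lambda>m. eval_s n \<omega> p m + eval_s n \<omega> q m)"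
proof -
  define N where "N = max (degree p) (degree q)"
  have "degree (p + q) \<le> N"
    unfolding N_def by (rule degree_add_le) auto
  then show ?thesis
    using eval_s_eq_sum_atMost[of "p + q" N] eval_s_eq_sum_atMost[of p N] eval_s_eq_sum_atMost[of q N]
    by (simp add: N_def sum.distrib algebra_simps)
qed

lemma eval_s_smult: "eval_s n \<omega> (smult c p) = (\<lambda>m. c * eval_s n \<omega> p m)"
  using eval_s_eq_sum_atMost[OF degree_smult_le, of n \<omega> c p] eval_s_eq_sum_atMost[of p "degree p" n \<omega>]
  by (simp add: sum_distrib_left algebra_simps)

lemma eval_s_const: "eval_s n \<omega> [:c:] = (\<lambda>m. c * weyl_one m)"
  by (simp add: eval_s_def)

lemma eval_s_pCons_0: "eval_s n \<omega> (pCons 0 p) = lmul_s n \<omega> (eval_s n \<omega> p)"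
proof -
  have "eval_s n \<omega> (pCons 0 p) =
      (\<lambda>m. \<Sum>k\<le>Suc (degree p). coeff (pCons 0 p) k * (lmul_s n \<omega> ^^ k) weyl_one m)"
    by (rule eval_s_eq_sum_atMost) (simp add: degree_pCons_le)
  also have "\<dots> = (\<lambda>m. \<Sum>k\<le>degree p. coeff p k * lmul_s n \<omega> ((lmul_s n \<omega> ^^ k) weyl_one) m)"
    by (simp only: sum.atMost_Suc_shift coeff_pCons_0 coeff_pCons_Suc funpow.simps o_apply) simp
  also have "\<dots> = lmul_s n \<omega> (eval_s n \<omega> p)"
    unfolding eval_s_def lmul_s_linear ..
  finally show ?thesis .
qed

lemma eval_s_linear: "eval_s n \<omega> [:c, 1:] = (\<lambda>m. c * weyl_one m + lmul_s n \<omega> weyl_one m)"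
  by (simp add: eval_s_def)

lemma lideal_sum:
  "finite K \<Longrightarrow> (\<And>k. k \<in> K \<Longrightarrow> Q k \<in> lideal n S) \<Longrightarrow> (\<lambda>m. \<Sum>k\<in>K. Q k m) \<in> lideal n S"
  by (induction K rule: finite_induct) (auto intro: lideal.zero lideal.add)

lemma lideal_lmul_s: "Q \<in> lideal n S \<Longrightarrow> lmul_s n \<omega> Q \<in> lideal n S"
  unfolding lmul_s_def by (rule lideal_sum) (auto intro: lideal.smult lideal.lx lideal.ld)

lemma eval_s_mult_mem_lideal:
  "eval_s n \<omega> p \<in> lideal n S \<Longrightarrow> eval_s n \<omega> (q * p) \<in> lideal n S"
proof (induction q rule: pCons_induct)
  case 0
  then show ?case
    by (simp add: eval_s_def lideal.zero)
next
  case (pCons a q)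
  have "eval_s n \<omega> (pCons a q * p) = (\<lambda>m. a * eval_s n \<omega> p m + lmul_s n \<omega> (eval_s n \<omega> (q * p)) m)"
    by (simp add: mult_pCons_left eval_s_add eval_s_smult eval_s_pCons_0)
  with pCons show ?case
    by (auto intro: lideal.add lideal.smult lideal_lmul_s)
qed

lemma lideal_eval_s_eq_multiples:
  assumes B: "eval_s n \<omega> B \<in> lideal n S" "degree B = 1" and one: "weyl_one \<notin> lideal n S"
  shows "{p. eval_s n \<omega> p \<in> lideal n S} = {q * B | q. True}"
proof (intro equalityI subsetI)
  fix p assume p: "p \<in> {p. eval_s n \<omega> p \<in> lideal n S}"
  have "eval_s n \<omega> (p + - (p div B) * B) \<in> lideal n S"
    unfolding eval_s_add using p by (intro lideal.add eval_s_mult_mem_lideal[OF B(1)]) simp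
  moreover have "p + - (p div B) * B = p mod B"
    by (simp add: minus_div_mult_eq_mod[symmetric])
  ultimately have r: "eval_s n \<omega> (p mod B) \<in> lideal n S"
    by simp
  have "p mod B = 0"
  proof (rule ccontr)
    assume "p mod B \<noteq> 0"
    moreover have "degree (p mod B) = 0"
      using degree_mod_less[of B p] B(2) by fastforce
    ultimately obtain c where c: "p mod B = [:c:]" "c \<noteq> 0"
      by (metis degree_0_id pCons_eq_0_iff)
    then have "(\<lambda>m. c * weyl_one m) \<in> lideal n S"
      using r by (simp add: eval_s_const)
    then have "(\<lambda>m. 1 / c * (c * weyl_one m)) \<in> lideal n S"
      by (rule lideal.smult)
    with c(2) one show False
      by simp
  qed
  then show "p \<in> {q * B | q. True}"
    by (metis (mono_tags) div_mult_mod_eq add_0_right mem_Collect_eq)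
qed (use eval_s_mult_mem_lideal[OF B(1)] in auto)

lemma bfunction_eqI:
  assumes B: "eval_s n \<omega> B \<in> init_ideal n \<omega> I" "degree B = 1" "lead_coeff B = 1"
    and one: "weyl_one \<notin> init_ideal n \<omega> I"
  shows "bfunction n \<omega> I = B"
  unfolding bfunction_def
proof (rule the_equality)
  have "{p. eval_s n \<omega> p \<in> init_ideal n \<omega> I} = {q * B | q. True}"
    using lideal_eval_s_eq_multiples[of n \<omega> B] B one by (simp add: init_ideal_def)
  then show "(B = 0 \<or> lead_coeff B = 1) \<and> {p. eval_s n \<omega> p \<in> init_ideal n \<omega> I} = {q * B | q. True}"
    using B(3) by simp
  fix b assume b: "(b = 0 \<or> lead_coeff b = 1) \<and> {p. eval_s n \<omega> p \<in> init_ideal n \<omega> I} = {q * b | q. True}"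
  with \<open>{p. eval_s n \<omega> p \<in> init_ideal n \<omega> I} = {q * B | q. True}\<close>
  have multiples: "{q * b | q. True} = {q * B | q. True}"
    by simp
  have "B = 1 * B" "b = 1 * b"
    by simp_all
  then have "B \<in> {q * b | q. True}" "b \<in> {q * B | q. True}"
    using multiples by blast+
  then obtain q q' where "B = q * b" "b = q' * B"
    by blast
  then have "b dvd B" "B dvd b"
    by (metis dvd_triv_right)+
  moreover have "b \<noteq> 0"
    using \<open>b dvd B\<close> B(2) by auto
  with b B(3) have "normalize b = b" "normalize B = B"
    by (simp_all add: normalize_poly_def one_pCons[symmetric])
  ultimately show "b = B"
    by (rule associated_eqI)
qed

lemma weighted_sum_dec:
  fixes c :: expo
  assumes "i < n" "0 < c i"
  shows "(\<Sum>j<n. \<omega> j * real ((c(i := c i - 1)) j)) = (\<Sum>j<n. \<omega> j * real (c j)) - \<omega> i"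
proof -
  have "(\<Sum>j<n. \<omega> j * real ((c(i := c i - 1)) j)) =
      (\<Sum>j<n. \<omega> j * real (c j) - (if j = i then \<omega> j else 0))"
    by (rule sum.cong) (use assms in \<open>auto simp: of_nat_diff algebra_simps\<close>)
  with assms show ?thesis
    by (simp add: sum_subtractf)
qed

lemma weight_dec_x_dec_d:
  "i < n \<Longrightarrow> 0 < a i \<Longrightarrow> 0 < b i \<Longrightarrow>
    weight n \<omega> (a(i := a i - 1), b(i := b i - 1)) = weight n \<omega> (a, b)"
  using weighted_sum_dec[of i n a \<omega>] weighted_sum_dec[of i n b \<omega>] by (simp add: weight_def)

lemma weight_funpow_lmul_s: "(lmul_s n \<omega> ^^ k) weyl_one m \<noteq> 0 \<Longrightarrow> weight n \<omega> m = 0"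
proof (induction k arbitrary: m)
  case 0
  then show ?case
    by (cases m) (auto simp: weyl_one_def weight_def split: if_splits)
next
  case (Suc k)
  let ?Q = "(lmul_s n \<omega> ^^ k) weyl_one"
  obtain a b where m: "m = (a, b)"
    by fastforce
  from Suc.prems obtain i where i: "i < n" and "lmul_x i (lmul_d i ?Q) (a, b) \<noteq> 0"
    unfolding m lmul_s_def by (auto elim: sum.not_neutral_contains_not_neutral)
  then have a: "0 < a i" and "lmul_d i ?Q (a(i := a i - 1), b) \<noteq> 0"
    by (auto simp: lmul_x_def split: if_splits)
  then have "(0 < b i \<and> ?Q (a(i := a i - 1), b(i := b i - 1)) \<noteq> 0) \<or> ?Q (a, b) \<noteq> 0"
    by (auto simp: lmul_d_def split: if_splits)
  then show ?case
    using Suc.IH weight_dec_x_dec_d[of i n a b \<omega>] i a unfolding m by auto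
qed

lemma eval_s_weight:
  assumes "eval_s n \<omega> p m \<noteq> 0"
  shows "weight n \<omega> m = 0"
proof -
  from assms obtain k where "coeff p k * (lmul_s n \<omega> ^^ k) weyl_one m \<noteq> 0"
    unfolding eval_s_def by (rule sum.not_neutral_contains_not_neutral)
  then have "(lmul_s n \<omega> ^^ k) weyl_one m \<noteq> 0"
    by simp
  then show ?thesis
    by (rule weight_funpow_lmul_s)
qed

lemma init_form_eq_self:
  assumes "P \<noteq> (\<lambda>_. 0)" "\<And>m. P m \<noteq> 0 \<Longrightarrow> weight n \<omega> m = c"
  shows "init_form n \<omega> P = P"
proof -
  have "weight n \<omega> ` {m. P m \<noteq> 0} = {c}"
    using assms by (auto simp: fun_eq_iff)
  with assms(2) show ?thesis
    by (auto simp: init_form_def fun_eq_iff)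
qed

lemma eval_s_linear_diagonal:
  assumes "i < n"
  shows "eval_s n \<omega> [:c, 1:] ((\<lambda>_. 0)(i := 1), (\<lambda>_. 0)(i := 1)) = complex_of_real (\<omega> i)"
proof -
  let ?e = "((\<lambda>_. 0)(i := 1)) :: expo"
  have "?e \<noteq> (\<lambda>_. 0)"
    by (auto simp: fun_eq_iff)
  moreover have "lmul_x j (lmul_d j weyl_one) (?e, ?e) = of_bool (j = i)" for j
    by (auto simp: lmul_x_def lmul_d_def weyl_one_def fun_eq_iff)
  ultimately show ?thesis
    using assms by (simp add: eval_s_linear lmul_s_def weyl_one_def)
qed

lemma poly_fun_xpow: "(\<lambda>z. xpow n a z) \<in> poly_fun"
  unfolding xpow_def by (intro poly_fun_prod poly_fun_power poly_fun.coord) simp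

lemma mpoly_eval_eq_sum_xpow: "mpoly_eval n f z = (\<Sum>a | f a \<noteq> 0. f a * xpow n a z)"
  by (simp add: mpoly_eval_def xpow_def)

lemma poly_fun_mpoly_eval: "f \<in> mpolys n \<Longrightarrow> mpoly_eval n f \<in> poly_fun"
  unfolding mpoly_eval_eq_sum_xpow[abs_def] mpolys_def
  by (auto intro!: poly_fun_sum poly_fun_cmult poly_fun_xpow)

lemma expo_deg_eq_total_degree:
  assumes "homogeneous n f" "f a \<noteq> 0"
  shows "expo_deg n a = total_degree n f"
proof -
  have "expo_deg n ` {a. f a \<noteq> 0} = {expo_deg n a}"
    using assms unfolding homogeneous_def by blast
  then show ?thesis
    by (simp add: total_degree_def)
qed

lemma mpoly_eval_dilate:
  assumes "homogeneous n f"
  shows "mpoly_eval n f (dilate t w) = t ^ total_degree n f * mpoly_eval n f w"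
  unfolding mpoly_eval_eq_sum_xpow xpow_dilate sum_distrib_left
  by (rule sum.cong) (simp_all add: expo_deg_eq_total_degree[OF assms] algebra_simps)

lemma partial_mpoly_eval:
  assumes "i < n"
  shows "partial i (mpoly_eval n f) z =
    (\<Sum>a | f a \<noteq> 0. f a * (of_nat (a i) * xpow n (a(i := a i - 1)) z))"
  unfolding mpoly_eval_eq_sum_xpow
  by (intro partial_eqI DERIV_sum DERIV_cmult has_field_derivative_xpow assms)

lemma euler_identity:
  assumes "homogeneous n f"
  shows "(\<Sum>i<n. z i * partial i (mpoly_eval n f) z) = of_nat (total_degree n f) * mpoly_eval n f z"
proof -
  have "(\<Sum>i<n. z i * partial i (mpoly_eval n f) z) =
      (\<Sum>i<n. \<Sum>a | f a \<noteq> 0. f a * (of_nat (a i) * xpow n a z))"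
  proof (rule sum.cong[OF refl])
    fix i assume "i \<in> {..<n}"
    then have i: "i < n"
      by simp
    show "z i * partial i (mpoly_eval n f) z = (\<Sum>a | f a \<noteq> 0. f a * (of_nat (a i) * xpow n a z))"
      unfolding partial_mpoly_eval[OF i] sum_distrib_left
    proof (rule sum.cong[OF refl])
      fix a
      show "z i * (f a * (of_nat (a i) * xpow n (a(i := a i - 1)) z)) = f a * (of_nat (a i) * xpow n a z)"
        using xpow_dec[OF i, of z a] by (simp only: mult.left_commute[of "z i"])
    qed
  qed
  also have "\<dots> = (\<Sum>a | f a \<noteq> 0. of_nat (expo_deg n a) * (f a * xpow n a z))"
    by (subst sum.swap) (simp add: expo_deg_def sum_distrib_left sum_distrib_right algebra_simps)
  also have "\<dots> = of_nat (total_degree n f) * mpoly_eval n f z"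
    by (simp add: mpoly_eval_eq_sum_xpow sum_distrib_left expo_deg_eq_total_degree[OF assms])
  finally show ?thesis .
qed

lemma digits_bound:
  fixes a :: "nat \<Rightarrow> nat"
  shows "(\<And>j. j < n \<Longrightarrow> a j < K) \<Longrightarrow> (\<Sum>j<n. a j * K ^ j) < K ^ n"
proof (induction n)
  case (Suc n)
  then have "(\<Sum>j<n. a j * K ^ j) + a n * K ^ n < K ^ n + a n * K ^ n"
    by simp
  also have "\<dots> \<le> K * K ^ n"
    using Suc.prems[of n] mult_right_mono[of "Suc (a n)" K "K ^ n"] by simp
  finally show ?case
    by simp
qed simp

lemma digits_inj:
  fixes a b :: "nat \<Rightarrow> nat"
  assumes "\<And>j. j < n \<Longrightarrow> a j < K" "\<And>j. j < n \<Longrightarrow> b j < K"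
    and "(\<Sum>j<n. a j * K ^ j) = (\<Sum>j<n. b j * K ^ j)" and "j < n"
  shows "a j = b j"
  using assms
proof (induction n)
  case (Suc n)
  have low: "(\<Sum>j<n. a j * K ^ j) < K ^ n" "(\<Sum>j<n. b j * K ^ j) < K ^ n"
    using Suc.prems(1,2) by (simp_all add: digits_bound)
  have "(\<Sum>j<n. a j * K ^ j) + a n * K ^ n = (\<Sum>j<n. b j * K ^ j) + b n * K ^ n"
    using Suc.prems(3) by simp
  moreover have "(s + c * K ^ n) div K ^ n = c" if "s < K ^ n" for s c
  proof -
    have "K ^ n \<noteq> 0"
      using that by (metis not_less0)
    with that show ?thesis
      by simp
  qed
  ultimately have "a n = b n"
    using low by metis
  with Suc show ?case
    by (cases "j = n") auto
qed simp

lemma inj_on_digits: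
  fixes S :: "(nat \<Rightarrow> nat) set"
  assumes "\<And>a j. a \<in> S \<Longrightarrow> j < n \<Longrightarrow> a j < K" and "\<And>a j. a \<in> S \<Longrightarrow> n \<le> j \<Longrightarrow> a j = 0"
  shows "inj_on (\<lambda>a. \<Sum>j<n. a j * K ^ j) S"
proof (rule inj_onI, rule ext)
  fix a b j assume ab: "a \<in> S" "b \<in> S" "(\<Sum>j<n. a j * K ^ j) = (\<Sum>j<n. b j * K ^ j)"
  show "a j = b j"
  proof (cases "j < n")
    case True
    with ab show ?thesis
      using digits_inj[of n a K b j] assms(1) by blast
  next
    case False
    with ab show ?thesis
      using assms(2) by (metis not_less)
  qed
qed

text \<open>Kronecker substitution \<open>z\<^sub>j = t ^ K ^ j\<close> turns \<open>f\<close> into a nonzero univariate polynomial.\<close>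
lemma mpoly_eval_nonzero:
  assumes f: "f \<in> mpolys n" and nz: "f \<noteq> (\<lambda>_. 0)"
  shows "\<exists>z. mpoly_eval n f z \<noteq> 0"
proof -
  define S where "S = {a. f a \<noteq> 0}"
  have S: "finite S" "\<And>a j. a \<in> S \<Longrightarrow> n \<le> j \<Longrightarrow> a j = 0"
    using f by (auto simp: mpolys_def S_def)
  obtain a0 where a0: "a0 \<in> S"
    using nz by (auto simp: S_def fun_eq_iff)
  define K where "K = Suc (\<Sum>a\<in>S. \<Sum>j<n. a j)"
  have aK: "a j < K" if "a \<in> S" "j < n" for a j
  proof -
    have "a j \<le> (\<Sum>j<n. a j)"
      using that by (intro member_le_sum) auto
    also have "\<dots> \<le> (\<Sum>a\<in>S. \<Sum>j<n. a j)"
      using that S by (intro member_le_sum) auto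
    finally show ?thesis
      by (simp add: K_def)
  qed
  define enc where "enc a = (\<Sum>j<n. a j * K ^ j)" for a
  have "inj_on enc S"
    unfolding enc_def using aK S(2) by (rule inj_on_digits)
  define Q where "Q = (\<Sum>a\<in>S. monom (f a) (enc a))"
  have eval: "mpoly_eval n f (\<lambda>j. t ^ (K ^ j)) = poly Q t" for t
  proof -
    have "xpow n a (\<lambda>j. t ^ (K ^ j)) = t ^ enc a" for a
      by (simp add: xpow_def enc_def power_sum mult.commute flip: power_mult)
    then show ?thesis
      by (simp add: mpoly_eval_eq_sum_xpow Q_def poly_sum poly_monom S_def)
  qed
  have "coeff Q (enc a0) = (\<Sum>a\<in>S. if a = a0 then f a else 0)"
    unfolding Q_def coeff_sum coeff_monom
    by (intro sum.cong) (use \<open>inj_on enc S\<close> a0 in \<open>auto dest: inj_onD\<close>)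
  also have "\<dots> \<noteq> 0"
    using S a0 by (simp add: S_def)
  finally have "Q \<noteq> 0"
    by auto
  then obtain t where "poly Q t \<noteq> 0"
    using poly_all_0_iff_0 by blast
  with eval show ?thesis
    by metis
qed

lemma laurent_coeff_eq_0:
  fixes c :: "'a \<Rightarrow> 'b::field_char_0" and e :: "'a \<Rightarrow> int"
  assumes A: "finite A" and zero: "\<And>t. t \<noteq> 0 \<Longrightarrow> (\<Sum>x\<in>A. c x * t powi e x) = 0"
  shows "(\<Sum>x | x \<in> A \<and> e x = k. c x) = 0"
proof -
  define N where "N = nat (\<Sum>x\<in>A. \<bar>e x\<bar>)"
  have N: "0 \<le> e x + int N" if "x \<in> A" for x
    using member_le_sum[of x A "\<lambda>x. \<bar>e x\<bar>"] A that by (simp add: N_def sum_nonneg)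
  define Q where "Q = (\<Sum>x\<in>A. monom (c x) (nat (e x + int N)))"
  have "poly Q t = 0" if t: "t \<noteq> 0" for t
  proof -
    have "poly Q t = (\<Sum>x\<in>A. t ^ N * (c x * t powi e x))"
      unfolding Q_def poly_sum poly_monom
    proof (rule sum.cong[OF refl])
      fix x assume "x \<in> A"
      then have "t ^ nat (e x + int N) = t powi e x * t ^ N"
        using N t by (simp add: power_int_add flip: power_int_of_nat)
      then show "c x * t ^ nat (e x + int N) = t ^ N * (c x * t powi e x)"
        by simp
    qed
    also have "\<dots> = 0"
      using zero[OF t] by (simp add: sum_distrib_left[symmetric])
    finally show ?thesis .
  qed
  then have "UNIV - {0} \<subseteq> {t. poly Q t = 0}"
    by auto
  then have "Q = 0"
    using poly_roots_finite[of Q] infinite_UNIV_char_0[where 'a = 'b] finite_subset by fastforce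
  show ?thesis
  proof (cases "0 \<le> k + int N")
    case True
    have "coeff Q (nat (k + int N)) = (\<Sum>x\<in>A. if e x = k then c x else 0)"
      unfolding Q_def coeff_sum coeff_monom
      by (rule sum.cong[OF refl]) (use N True in \<open>auto simp: eq_nat_nat_iff\<close>)
    with \<open>Q = 0\<close> A show ?thesis
      by (simp add: sum.If_cases Int_def conj_commute)
  next
    case False
    then have "{x. x \<in> A \<and> e x = k} = {}"
      using N by force
    then show ?thesis
      by (simp only: sum.empty)
  qed
qed

section \<open>The annihilator of \<open>1/f\<close> for homogeneous \<open>f\<close>\<close>

lemma weight_ones: "weight n (\<lambda>_. 1) m = real (expo_deg n (snd m)) - real (expo_deg n (fst m))"
  by (simp add: weight_def expo_deg_def)

locale homogeneous_mpoly =
  fixes n :: nat and f :: cpoly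
  assumes mpoly: "f \<in> mpolys n" and nonzero: "f \<noteq> (\<lambda>_. 0)" and homog: "homogeneous n f"
begin

sublocale homogeneous_denominator "mpoly_eval n f" "total_degree n f"
  by unfold_locales (simp_all add: poly_fun_mpoly_eval[OF mpoly] mpoly_eval_dilate[OF homog])

abbreviation D :: nat where "D \<equiv> total_degree n f"

abbreviation inv_f :: "(nat \<Rightarrow> complex) \<Rightarrow> complex" where "inv_f \<equiv> \<lambda>w. 1 / mpoly_eval n f w"

lemma Ann_inv_iff:
  "P \<in> Ann_inv n f \<longleftrightarrow> P \<in> weyl_elems n \<and> (\<forall>z\<in>nonzero_locus. weyl_act n P inv_f z = 0)"
  by (auto simp: Ann_inv_def nonzero_locus_def)

lemma lideal_subset_Ann_inv:
  assumes "S \<subseteq> Ann_inv n f"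
  shows "lideal n S \<subseteq> Ann_inv n f"
proof
  fix P assume "P \<in> lideal n S"
  then show "P \<in> Ann_inv n f"
  proof induction
    case (gen P)
    with assms show ?case
      by blast
  next
    case zero
    show ?case
      by (simp add: Ann_inv_iff weyl_elems_zero weyl_act_zero)
  next
    case (add P Q)
    then show ?case
      by (simp add: Ann_inv_iff weyl_elems_add weyl_act_add)
  next
    case (smult P c)
    then show ?case
      by (simp add: Ann_inv_iff weyl_elems_smult weyl_act_smult)
  next
    case (lx P i)
    then show ?case
      by (simp add: Ann_inv_iff weyl_elems_lmul_x weyl_act_lmul_x)
  next
    case (ld P i)
    then have P: "P \<in> weyl_elems n" and zero: "\<forall>z\<in>nonzero_locus. weyl_act n P inv_f z = 0"
      by (simp_all add: Ann_inv_iff)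
    have "\<forall>z\<in>nonzero_locus. partial i (weyl_act n P inv_f) z = partial i (\<lambda>_. 0) z"
      by (rule partial_cong) (simp add: zero)
    with ld.hyps(2) P show ?case
      by (simp add: Ann_inv_iff weyl_act_lmul_d rat_funs_inverse weyl_elems_lmul_d)
  qed
qed

text \<open>\<open>e m\<close> is the power of \<open>t\<close> that the term \<open>m\<close> of \<open>P (1/f)\<close> acquires when \<open>z\<close> is replaced
  by \<open>t z\<close>; it determines the weight of \<open>m\<close>.\<close>
lemma init_form_mem_Ann_inv:
  assumes P: "P \<in> Ann_inv n f" and P0: "P \<noteq> (\<lambda>_. 0)"
  shows "init_form n (\<lambda>_. 1) P \<in> Ann_inv n f"
proof -
  define A where "A = {m. P m \<noteq> 0}"
  have PW: "P \<in> weyl_elems n" and Pz: "\<forall>z\<in>nonzero_locus. weyl_act n P inv_f z = 0"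
    using P by (auto simp: Ann_inv_iff)
  have A: "finite A" "A \<noteq> {}"
    using weyl_elems_finite_support[OF PW] P0 by (auto simp: A_def fun_eq_iff)
  define M where "M = Max (weight n (\<lambda>_. 1) ` A)"
  have "M \<in> weight n (\<lambda>_. 1) ` A"
    unfolding M_def using A by (intro Max_in) auto
  then obtain m0 where m0: "m0 \<in> A" "weight n (\<lambda>_. 1) m0 = M"
    by blast
  define e where "e m = int (expo_deg n (fst m)) - int (D + expo_deg n (snd m))" for m
  have same_weight: "weight n (\<lambda>_. 1) m = M \<longleftrightarrow> e m = e m0" for m
    using m0(2) by (auto simp: weight_ones e_def)
  have init: "init_form n (\<lambda>_. 1) P = (\<lambda>m. if e m = e m0 then P m else 0)"
    unfolding init_form_def Let_def A_def[symmetric] M_def[symmetric] by (simp add: same_weight)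
  have "init_form n (\<lambda>_. 1) P \<in> weyl_elems n"
    unfolding init using PW by (rule weyl_elems_restrict)
  moreover have "weyl_act n (init_form n (\<lambda>_. 1) P) inv_f z = 0" if z: "z \<in> nonzero_locus" for z
  proof -
    define c where "c m = P m * xpow n (fst m) z * dpow n (snd m) inv_f z" for m
    have "(\<Sum>m\<in>A. c m * t powi e m) = 0" if "t \<noteq> 0" for t
      using weyl_act_dilate[OF rat_funs_inverse neg_homogeneous_inverse z that, of n P]
        Pz dilate_nonzero_locus[OF z that]
      by (simp add: A_def c_def e_def)
    then have vanish: "(\<Sum>m | m \<in> A \<and> e m = e m0. c m) = 0"
      by (rule laurent_coeff_eq_0[OF A(1)])
    have "weyl_act n (init_form n (\<lambda>_. 1) P) inv_f z =
        (\<Sum>m\<in>A. init_form n (\<lambda>_. 1) P m * (xpow n (fst m) z * dpow n (snd m) inv_f z))"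
      unfolding weyl_act_eq_weyl_sum by (rule weyl_sum_superset[OF A(1)]) (auto simp: init A_def)
    also have "\<dots> = (\<Sum>m | m \<in> A \<and> e m = e m0. c m)"
      unfolding sum.inter_filter[OF A(1)] init c_def by (intro sum.cong) (simp_all add: mult.assoc)
    finally show ?thesis
      using vanish by simp
  qed
  ultimately show ?thesis
    by (simp add: Ann_inv_iff)
qed

lemma init_ideal_subset_Ann_inv: "init_ideal n (\<lambda>_. 1) (Ann_inv n f) \<subseteq> Ann_inv n f"
  unfolding init_ideal_def by (rule lideal_subset_Ann_inv) (auto intro: init_form_mem_Ann_inv)

lemma weyl_one_notin_Ann_inv: "weyl_one \<notin> Ann_inv n f"
proof
  assume "weyl_one \<in> Ann_inv n f"
  moreover obtain z where "mpoly_eval n f z \<noteq> 0"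
    using mpoly_eval_nonzero[OF mpoly nonzero] by blast
  ultimately show False
    by (simp add: Ann_inv_def weyl_act_one)
qed

lemma euler_operator_mem_Ann_inv: "eval_s n (\<lambda>_. 1) [:of_nat D, 1:] \<in> Ann_inv n f"
proof -
  have "weyl_act n (eval_s n (\<lambda>_. 1) [:of_nat D, 1:]) inv_f z = 0" if z: "z \<in> nonzero_locus" for z
  proof -
    have "weyl_act n (eval_s n (\<lambda>_. 1) [:of_nat D, 1:]) inv_f z =
        of_nat D / mpoly_eval n f z + (\<Sum>i<n. z i * partial i inv_f z)"
      unfolding eval_s_linear
      by (simp add: weyl_act_add weyl_act_smult weyl_act_lmul_s[OF _ rat_funs_inverse z]
          weyl_act_one weyl_elems_smult weyl_elems_one weyl_elems_lmul_s)
    moreover have "(\<Sum>i<n. z i * partial i inv_f z) =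
        - (\<Sum>i<n. z i * partial i (mpoly_eval n f) z) / mpoly_eval n f z ^ 2"
      using z by (simp add: partial_inverse sum_divide_distrib sum_negf)
    moreover have "\<dots> = - of_nat D / mpoly_eval n f z"
      using z by (simp add: euler_identity[OF homog] nonzero_locus_def power2_eq_square)
    ultimately show ?thesis
      by simp
  qed
  moreover have "eval_s n (\<lambda>_. 1) [:of_nat D, 1:] \<in> weyl_elems n"
    unfolding eval_s_linear by (intro weyl_elems_add weyl_elems_smult weyl_elems_one weyl_elems_lmul_s)
  ultimately show ?thesis
    by (simp add: Ann_inv_iff)
qed

lemma euler_operator_mem_init_ideal:
  assumes "0 < n"
  shows "eval_s n (\<lambda>_. 1) [:of_nat D, 1:] \<in> init_ideal n (\<lambda>_. 1) (Ann_inv n f)"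
proof -
  define E where "E = eval_s n (\<lambda>_. 1) [:of_nat D, 1:]"
  have "E ((\<lambda>_. 0)(0 := 1), (\<lambda>_. 0)(0 := 1)) = 1"
    using eval_s_linear_diagonal[OF assms] by (simp add: E_def)
  then have "E \<noteq> (\<lambda>_. 0)"
    by auto
  moreover from this have "init_form n (\<lambda>_. 1) E = E"
    using eval_s_weight[of n "\<lambda>_. 1"] unfolding E_def by (rule init_form_eq_self)
  ultimately have "E \<in> {init_form n (\<lambda>_. 1) P | P. P \<in> Ann_inv n f \<and> P \<noteq> (\<lambda>_. 0)}"
    using euler_operator_mem_Ann_inv unfolding E_def by (intro CollectI exI[of _ E]) (simp add: E_def)
  then show ?thesis
    unfolding init_ideal_def E_def by (rule lideal.gen)
qed

lemma bfunction_Ann_inv: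
  assumes "0 < n"
  shows "bfunction n (\<lambda>_. 1) (Ann_inv n f) = [:of_nat D, 1:]"
  using euler_operator_mem_init_ideal[OF assms] init_ideal_subset_Ann_inv weyl_one_notin_Ann_inv
  by (intro bfunction_eqI) auto

end

theorem mainTheorem10:
  fixes n d :: nat and f :: "(nat \<Rightarrow> nat) \<Rightarrow> complex"
  assumes "1 \<le> n"
    and "f \<in> mpolys n"
    and "f \<noteq> (\<lambda>_. 0)"
    and "homogeneous n f"
  shows "bfunction n (\<lambda>_. 1) (Ann_inv n f) = [:of_nat d, 1:] \<longleftrightarrow> total_degree n f = d"
proof -
  interpret homogeneous_mpoly n f
    using assms(2-4) by unfold_locales
  from assms(1) have "bfunction n (\<lambda>_. 1) (Ann_inv n f) = [:of_nat (total_degree n f), 1:]"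
    by (intro bfunction_Ann_inv) simp
  then show ?thesis
    by auto
qed

end
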